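(* Let $G_0$ be the group of homeomorphisms of $\mathbb{R}$ defined in the context. The finite-index subgroups of $G_0$ are in bijection with the finite-index subgroups of $\mathbb{Z}^3$ (the abelianization of $G_0$). Every subgroup $K$ of finite index in $G_0$ is normal, and $K'=G_0'$.
   Context: $G_0$ is the group of homeomorphisms of $\mathbb{R}$ generated by the following maps: - $a(t)=t+1$; - $b$, where $b(t)=t$ for $t\le 0$, $b(t)=t/(1-t)$ for $0\le t\le 1/2$, $b(t)=(3t-1)/t$ for $1/2\le t\le 1$, and $b(t)=t+1$ for $t\ge 1$; - $c$, where $c(t)=2t/(t+1)$ for $0\le t\le 1$ and $c(t)=t$ otherwise. The abelianization $G_0/G_0'$ is isomorphic to $\mathbb{Z}^3$ via $a\mapsto(1,0,0)$, $b\mapsto(0,1,0)$, $c\mapsto(0,0,1)$. Primes denote commutator subgroups. *)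

theory Defs
  imports Complex_Main "HOL-Algebra.Algebra"
begin

definition gen_a :: "real \<Rightarrow> real" where
  "gen_a t = t + 1"

definition gen_b :: "real \<Rightarrow> real" where
  "gen_b t = (if t \<le> 0 then t
              else if t \<le> 1/2 then t / (1 - t)
              else if t \<le> 1 then (3*t - 1) / t
              else t + 1)"

definition gen_c :: "real \<Rightarrow> real" where
  "gen_c t = (if 0 \<le> t \<and> t \<le> 1 then 2*t / (t + 1) else t)"

definition G0 :: "(real \<Rightarrow> real) monoid" where
  "G0 = (BijGroup (UNIV :: real set))
          \<lparr>carrier := generate (BijGroup (UNIV :: real set)) {gen_a, gen_b, gen_c}\<rparr>"

definition Z3 :: "(int \<times> int \<times> int) monoid" where
  "Z3 = \<lparr>partial_object.carrier = UNIV,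
         monoid.mult = (\<lambda>x y. (fst x + fst y, fst (snd x) + fst (snd y), snd (snd x) + snd (snd y))),
         monoid.one = (0, 0, 0)\<rparr>"

definition fin_index_subgroup :: "('a, 'b) monoid_scheme \<Rightarrow> 'a set \<Rightarrow> bool" where
  "fin_index_subgroup G K \<longleftrightarrow> subgroup K G \<and> finite (rcosets\<^bsub>G\<^esub> K)"

end

theory Submission
  imports Defs
begin

text \<open>
  Every finite-index subgroup \<open>K\<close> of \<open>G0\<close> contains \<open>G0'\<close>: the normal core \<open>N\<close> of \<open>K\<close> contains a
  translation by some \<open>s \<ge> 2\<close>, and modulo any normal subgroup the generators commute once the three
  commutators \<open>[c, b]\<close>, \<open>[a b\<inverse>, b]\<close>, \<open>[c, b\<inverse> a]\<close> are trivial. For each of them, \<open>[x, y]\<close>, write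
  \<open>x = (k x k\<inverse>) [k, x\<inverse>]\<close> with \<open>k\<close> a translation by \<open>\<plusminus>s\<close>: the conjugate \<open>k x k\<inverse>\<close> has its support
  moved off that of \<open>y\<close>, so it commutes with \<open>y\<close>, and \<open>[k, x\<inverse>] \<in> N\<close>. The same decomposition,
  together with a second support argument, places these commutators in \<open>G0''\<close>, so \<open>G0'\<close> is perfect.
  Hence \<open>K\<close> is normal and \<open>G0' = G0'' \<subseteq> K' \<subseteq> G0'\<close>.

  The map sending \<open>g\<close> to its translation length near \<open>-\<infinity>\<close>, the change of translation length towards
  \<open>+\<infinity>\<close>, and the total \<open>log\<^sub>4\<close>-jump of its derivative at the breakpoints is a homomorphism from
  \<open>G0\<close> onto \<open>\<int>\<^sup>3\<close> whose kernel lies in \<open>G0'\<close>; finite-index subgroups, all containing the kernel,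
  therefore correspond to those of \<open>\<int>\<^sup>3\<close>.
\<close>

definition commutator :: "('a, 'b) monoid_scheme \<Rightarrow> 'a \<Rightarrow> 'a \<Rightarrow> 'a" where
  "commutator G x y = x \<otimes>\<^bsub>G\<^esub> y \<otimes>\<^bsub>G\<^esub> inv\<^bsub>G\<^esub> x \<otimes>\<^bsub>G\<^esub> inv\<^bsub>G\<^esub> y"

context group
begin

lemma inv_mult_cancel_left [simp]: "x \<in> carrier G \<Longrightarrow> z \<in> carrier G \<Longrightarrow> inv x \<otimes> (x \<otimes> z) = z"
  by (simp add: m_assoc [symmetric])

lemma mult_inv_cancel_left [simp]: "x \<in> carrier G \<Longrightarrow> z \<in> carrier G \<Longrightarrow> x \<otimes> (inv x \<otimes> z) = z"
  by (simp add: m_assoc [symmetric])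

lemma commutator_closed [intro, simp]:
  "x \<in> carrier G \<Longrightarrow> y \<in> carrier G \<Longrightarrow> commutator G x y \<in> carrier G"
  by (simp add: commutator_def)

lemma commutator_in_derived: "x \<in> H \<Longrightarrow> y \<in> H \<Longrightarrow> commutator G x y \<in> derived G H"
  unfolding commutator_def derived_def by (rule generate.incl) blast

lemma commutator_of_commuting:
  assumes "x \<in> carrier G" "y \<in> carrier G" "x \<otimes> y = y \<otimes> x"
  shows "commutator G x y = \<one>"
  using assms by (simp add: commutator_def m_assoc)

lemma inv_commutator:
  "x \<in> carrier G \<Longrightarrow> y \<in> carrier G \<Longrightarrow> inv (commutator G x y) = commutator G y x"
  by (simp add: commutator_def inv_mult_group m_assoc)

lemma commutator_mult_left:
  assumes "x1 \<in> carrier G" "x2 \<in> carrier G" "y \<in> carrier G"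
  shows "commutator G (x1 \<otimes> x2) y = x1 \<otimes> commutator G x2 y \<otimes> inv x1 \<otimes> commutator G x1 y"
  using assms by (simp add: commutator_def inv_mult_group m_assoc)

lemma commutator_inv_left:
  assumes "x \<in> carrier G" "y \<in> carrier G"
  shows "commutator G (inv x) y = inv x \<otimes> commutator G y x \<otimes> x"
  using assms by (simp add: commutator_def m_assoc)

lemma commutator_in_normal_swap:
  assumes "N \<lhd> G" "x \<in> carrier G" "y \<in> carrier G" "commutator G x y \<in> N"
  shows "commutator G y x \<in> N"
  by (metis assms inv_commutator normal_imp_subgroup subgroup.m_inv_closed)

lemma commutator_in_normal_mult_left:
  assumes N: "N \<lhd> G" and "x1 \<in> carrier G" "x2 \<in> carrier G" "y \<in> carrier G"
    and "commutator G x1 y \<in> N" "commutator G x2 y \<in> N"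
  shows "commutator G (x1 \<otimes> x2) y \<in> N"
proof -
  interpret normal N G by (rule N)
  have "x1 \<otimes> commutator G x2 y \<otimes> inv x1 \<in> N" using assms inv_op_closed2 by blast
  then show ?thesis using assms by (simp add: commutator_mult_left)
qed

lemma commutator_in_normal_if_left_in:
  assumes N: "N \<lhd> G" and "x \<in> N" "y \<in> carrier G"
  shows "commutator G x y \<in> N"
proof -
  interpret normal N G by (rule N)
  have "y \<otimes> inv x \<otimes> inv y \<in> N" using assms inv_op_closed2 by blast
  then have "x \<otimes> (y \<otimes> inv x \<otimes> inv y) \<in> N" using assms by blast
  then show ?thesis using assms by (simp add: commutator_def m_assoc)
qed

lemma subgroup_commuting_mod_normal:
  assumes N: "N \<lhd> G" and y: "y \<in> carrier G"
  shows "subgroup {x \<in> carrier G. commutator G x y \<in> N} G"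
proof (rule subgroupI)
  interpret normal N G by (rule N)
  show "{x \<in> carrier G. commutator G x y \<in> N} \<noteq> {}"
    using y by (auto intro!: exI[of _ \<one>] simp: commutator_of_commuting)
  show "inv x \<in> {x \<in> carrier G. commutator G x y \<in> N}"
    if "x \<in> {x \<in> carrier G. commutator G x y \<in> N}" for x
    using that y inv_op_closed1 commutator_in_normal_swap[OF N]
    by (auto simp: commutator_inv_left)
  show "x1 \<otimes> x2 \<in> {x \<in> carrier G. commutator G x y \<in> N}"
    if "x1 \<in> {x \<in> carrier G. commutator G x y \<in> N}" "x2 \<in> {x \<in> carrier G. commutator G x y \<in> N}"
    for x1 x2
    using that y commutator_in_normal_mult_left[OF N] by auto
qed auto

lemma derived_subset_normal_if_generators_commute:
  assumes N: "N \<lhd> G" and S: "S \<subseteq> carrier G" "generate G S = carrier G"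
    and comm: "\<And>s t. s \<in> S \<Longrightarrow> t \<in> S \<Longrightarrow> commutator G s t \<in> N"
  shows "derived G (carrier G) \<subseteq> N"
proof -
  have generators_suffice: "carrier G \<subseteq> {x \<in> carrier G. commutator G x y \<in> N}"
    if "y \<in> carrier G" "S \<subseteq> {x \<in> carrier G. commutator G x y \<in> N}" for y
    using generate_subgroup_incl[OF that(2) subgroup_commuting_mod_normal[OF N that(1)]] S by simp
  have "commutator G t x \<in> N" if "t \<in> S" "x \<in> carrier G" for t x
    using generators_suffice[of t] comm that S commutator_in_normal_swap[OF N] by blast
  then have "commutator G x y \<in> N" if "x \<in> carrier G" "y \<in> carrier G" for x y
    using generators_suffice[of y] that S by blast
  then have "derived_set G (carrier G) \<subseteq> N"
    by (auto simp: commutator_def)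
  then show ?thesis
    unfolding derived_def using N normal_imp_subgroup generate_subgroup_incl by blast
qed

text \<open>Uses \<open>x = (k x k\<inverse>) [k, x\<inverse>]\<close>.\<close>

lemma commutator_in_normal_via_conjugate:
  assumes N: "N \<lhd> G" and xyk: "x \<in> carrier G" "y \<in> carrier G" "k \<in> carrier G"
    and comm: "(k \<otimes> x \<otimes> inv k) \<otimes> y = y \<otimes> (k \<otimes> x \<otimes> inv k)"
    and "commutator G (commutator G k (inv x)) y \<in> N"
  shows "commutator G x y \<in> N"
proof -
  have "x = (k \<otimes> x \<otimes> inv k) \<otimes> commutator G k (inv x)"
    using xyk by (simp add: commutator_def m_assoc)
  moreover have "commutator G (k \<otimes> x \<otimes> inv k) y \<in> N"
    using xyk comm N normal_imp_subgroup subgroup.one_closed by (fastforce simp: commutator_of_commuting)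
  ultimately show ?thesis
    using assms commutator_in_normal_mult_left[OF N] by (metis commutator_closed inv_closed m_closed)
qed

lemma commutator_in_second_derived:
  assumes h: "h \<in> derived G (carrier G)" and gk: "g \<in> carrier G" "k \<in> carrier G"
    and comm: "(k \<otimes> inv g \<otimes> inv k) \<otimes> h = h \<otimes> (k \<otimes> inv g \<otimes> inv k)"
  shows "commutator G h g \<in> derived G (derived G (carrier G))"
proof -
  define m where "m = k \<otimes> inv g \<otimes> inv k"
  have hc: "h \<in> carrier G" using h derived_in_carrier by blast
  have m: "m \<in> carrier G" using gk by (simp add: m_def)
  have "commutator G (commutator G g k) h = commutator G (g \<otimes> m) h"
    using gk by (simp add: commutator_def m_def m_assoc)
  also have "\<dots> = commutator G g h"
    using gk hc m comm by (simp add: commutator_mult_left commutator_of_commuting m_def m_assoc)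
  finally have "commutator G g h \<in> derived G (derived G (carrier G))"
    by (metis commutator_in_derived gk h)
  then show ?thesis
    using commutator_in_normal_swap[OF derived_is_normal[OF derived_self_is_normal]] gk hc by blast
qed

lemma normal_if_derived_subset:
  assumes K: "subgroup K G" and D: "derived G (carrier G) \<subseteq> K"
  shows "K \<lhd> G"
proof -
  interpret K: subgroup K G by (rule K)
  have "x \<otimes> h \<otimes> inv x \<in> K" if "x \<in> carrier G" "h \<in> K" for x h
  proof -
    have "x \<otimes> h \<otimes> inv x = commutator G x h \<otimes> h"
      using that K.subset by (auto simp: commutator_def m_assoc)
    moreover have "commutator G x h \<in> K"
      using commutator_in_derived[of x "carrier G" h] that K.subset D by blast
    ultimately show ?thesis using that by simp
  qed
  then show ?thesis using K normal_inv_iff by blast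
qed

lemma derived_eq_if_perfect:
  assumes "subgroup K G" "derived G (carrier G) \<subseteq> K"
    and "derived G (carrier G) \<subseteq> derived G (derived G (carrier G))"
  shows "derived G K = derived G (carrier G)"
  using assms mono_derived[of "derived G (carrier G)" K] mono_derived[OF subgroup.subset]
  by (meson derived_in_carrier dual_order.trans subset_antisym subset_refl)

definition normal_core :: "'a set \<Rightarrow> 'a set" where
  "normal_core K = {g \<in> carrier G. \<forall>x\<in>carrier G. x \<otimes> g \<otimes> inv x \<in> K}"

lemma normal_core_subset: "subgroup K G \<Longrightarrow> normal_core K \<subseteq> K"
  by (auto simp: normal_core_def dest: bspec[of _ _ \<one>])

lemma normal_core_normal:
  assumes K: "subgroup K G"
  shows "normal_core K \<lhd> G"
proof -
  interpret K: subgroup K G by (rule K)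
  have conj_mult: "x \<otimes> (a \<otimes> b) \<otimes> inv x = (x \<otimes> a \<otimes> inv x) \<otimes> (x \<otimes> b \<otimes> inv x)"
    if "x \<in> carrier G" "a \<in> carrier G" "b \<in> carrier G" for x a b
    using that by (simp add: m_assoc)
  have conj_inv: "x \<otimes> inv a \<otimes> inv x = inv (x \<otimes> a \<otimes> inv x)"
    if "x \<in> carrier G" "a \<in> carrier G" for x a
    using that by (simp add: inv_mult_group m_assoc)
  have conj_conj: "y \<otimes> (x \<otimes> a \<otimes> inv x) \<otimes> inv y = (y \<otimes> x) \<otimes> a \<otimes> inv (y \<otimes> x)"
    if "x \<in> carrier G" "y \<in> carrier G" "a \<in> carrier G" for x y a
    using that by (simp add: inv_mult_group m_assoc)
  have "subgroup (normal_core K) G"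
  proof (rule subgroupI)
    show "normal_core K \<noteq> {}" using one_closed by (auto simp: normal_core_def)
    show "inv a \<in> normal_core K" if "a \<in> normal_core K" for a
      using that by (auto simp: normal_core_def conj_inv)
    show "a \<otimes> b \<in> normal_core K" if "a \<in> normal_core K" "b \<in> normal_core K" for a b
      using that by (auto simp: normal_core_def conj_mult)
  qed (auto simp: normal_core_def)
  moreover have "x \<otimes> a \<otimes> inv x \<in> normal_core K" if "x \<in> carrier G" "a \<in> normal_core K" for x a
    using that by (auto simp: normal_core_def conj_conj)
  ultimately show ?thesis by (simp add: normal_inv_iff)
qed

text \<open>Right multiplication by the powers of \<open>t\<close> permutes the finitely many right cosets of \<open>K\<close>,
  so two of these permutations coincide.\<close>

lemma rcoset_pow_actions_coincide:
  assumes K: "subgroup K G" "finite (rcosets K)" and t: "t \<in> carrier G"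
  shows "\<exists>i j. i < (j::nat) \<and> (\<forall>C\<in>rcosets K. C #> t [^] i = C #> t [^] j)"
proof -
  define \<Phi> where "\<Phi> = (\<lambda>i::nat. restrict (\<lambda>C. C #> t [^] i) (rcosets K))"
  have "\<Phi> i \<in> rcosets K \<rightarrow>\<^sub>E rcosets K" for i
  proof
    fix C assume "C \<in> rcosets K"
    then obtain x where "x \<in> carrier G" "C = K #> x" by (auto simp: RCOSETS_def)
    then show "\<Phi> i C \<in> rcosets K"
      using t K by (auto simp: \<Phi>_def RCOSETS_def coset_mult_assoc subgroup.subset)
  qed (simp add: \<Phi>_def)
  then have "range \<Phi> \<subseteq> rcosets K \<rightarrow>\<^sub>E rcosets K" by blast
  moreover have "finite (rcosets K \<rightarrow>\<^sub>E rcosets K)"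
    using K by (simp add: finite_PiE)
  ultimately have "finite (range \<Phi>)"
    by (rule finite_subset)
  then have "\<not> inj \<Phi>"
    using finite_imageD infinite_UNIV_nat by blast
  then obtain i j where "i \<noteq> j" "\<Phi> i = \<Phi> j"
    by (auto simp: inj_def)
  then obtain i j where "i < j" "\<Phi> i = \<Phi> j"
    by (metis linorder_neqE_nat)
  then show ?thesis
    by (metis \<Phi>_def restrict_apply')
qed

lemma pow_in_normal_core:
  assumes K: "fin_index_subgroup G K" and t: "t \<in> carrier G"
  shows "\<exists>n>0. t [^] (n::nat) \<in> normal_core K"
proof -
  have Ks: "subgroup K G" and fin: "finite (rcosets K)"
    using K by (auto simp: fin_index_subgroup_def)
  interpret K: subgroup K G by (rule Ks)
  obtain i j :: nat where ij: "i < j" "\<forall>C\<in>rcosets K. C #> t [^] i = C #> t [^] j"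
    using rcoset_pow_actions_coincide[OF Ks fin t] by blast
  have "y \<otimes> t [^] (j - i) \<otimes> inv y \<in> K" if y: "y \<in> carrier G" for y
  proof -
    define x where "x = y \<otimes> inv (t [^] i)"
    have x: "x \<in> carrier G" using y t by (simp add: x_def)
    then have "K #> x \<in> rcosets K" by (auto simp: RCOSETS_def)
    then have "(K #> x) #> t [^] i = (K #> x) #> t [^] j"
      using ij(2) by blast
    then have "K #> (x \<otimes> t [^] i) = K #> (x \<otimes> t [^] j)"
      using x t by (simp add: coset_mult_assoc K.subset)
    moreover have "x \<otimes> t [^] i = y"
      using y t by (simp add: x_def m_assoc)
    moreover have "t [^] j = t [^] i \<otimes> t [^] (j - i)"
      using nat_pow_mult[OF t, of i "j - i"] ij(1) by simp
    then have "x \<otimes> t [^] j = y \<otimes> t [^] (j - i)"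
      using y t by (simp add: x_def m_assoc)
    ultimately have "y \<otimes> t [^] (j - i) \<in> K #> y"
      using repr_independenceD[OF Ks, of "y \<otimes> t [^] (j - i)" y] y t by simp
    then show ?thesis using K.rcos_module_imp[OF is_group y] by simp
  qed
  then have "t [^] (j - i) \<in> normal_core K"
    using t by (simp add: normal_core_def)
  then show ?thesis
    using ij(1) by (intro exI[of _ "j - i"]) simp
qed

lemma hom_eq_on_generate:
  assumes "group H" "f \<in> hom G H" "f' \<in> hom G H" "S \<subseteq> carrier G"
    and "\<And>s. s \<in> S \<Longrightarrow> f s = f' s" "x \<in> generate G S"
  shows "f x = f' x"
proof -
  interpret f: group_hom G H f
    by (rule group_hom.intro[OF is_group assms(1)]) (simp add: group_hom_axioms_def assms(2))
  interpret f': group_hom G H f'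
    by (rule group_hom.intro[OF is_group assms(1)]) (simp add: group_hom_axioms_def assms(3))
  from assms(6) show ?thesis
  proof (induction x rule: generate.induct)
    case (inv h) then show ?case using assms(4,5) f.hom_inv f'.hom_inv by auto
  next
    case (eng h1 h2) then show ?case
      using generate_in_carrier[OF assms(4)] f.hom_mult f'.hom_mult by auto
  qed (simp_all add: assms(5))
qed

end

context group_hom
begin

lemma image_rcoset:
  "K \<subseteq> carrier G \<Longrightarrow> g \<in> carrier G \<Longrightarrow> h ` (K #>\<^bsub>G\<^esub> g) = (h ` K) #>\<^bsub>H\<^esub> h g"
  unfolding r_coset_def by (auto simp: subset_iff image_iff)

lemma subgroup_vimage:
  assumes L: "subgroup L H"
  shows "subgroup (h -` L \<inter> carrier G) G"
proof (rule G.subgroupI)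
  show "h -` L \<inter> carrier G \<noteq> {}"
    using subgroup.one_closed[OF L] by (metis G.one_closed IntI empty_iff hom_one vimageI)
qed (auto simp: L subgroup.m_closed subgroup.m_inv_closed)

lemma vimage_rcoset:
  assumes L: "subgroup L H" and g: "g \<in> carrier G"
  shows "(h -` L \<inter> carrier G) #>\<^bsub>G\<^esub> g = h -` (L #>\<^bsub>H\<^esub> h g) \<inter> carrier G"
proof -
  have "subgroup (h -` L \<inter> carrier G) G"
    using L by (rule subgroup_vimage)
  then have "x \<in> (h -` L \<inter> carrier G) #>\<^bsub>G\<^esub> g \<longleftrightarrow> x \<in> h -` (L #>\<^bsub>H\<^esub> h g) \<inter> carrier G"
    if "x \<in> carrier G" for x
    using that g by (simp add: subgroup.rcos_module[OF _ G.is_group] subgroup.rcos_module[OF L H.is_group])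
  moreover have "(h -` L \<inter> carrier G) #>\<^bsub>G\<^esub> g \<subseteq> carrier G"
    using g by (simp add: G.r_coset_subset_G)
  ultimately show ?thesis by blast
qed

lemma vimage_image_subgroup:
  assumes K: "subgroup K G" and ker: "kernel G H h \<subseteq> K"
  shows "h -` (h ` K) \<inter> carrier G = K"
proof
  interpret K: subgroup K G by (rule K)
  show "h -` (h ` K) \<inter> carrier G \<subseteq> K"
  proof
    fix x assume "x \<in> h -` (h ` K) \<inter> carrier G"
    then obtain k where x: "x \<in> carrier G" and k: "k \<in> K" "h x = h k" by auto
    then have "h (x \<otimes> inv k) = \<one>\<^bsub>H\<^esub>" by (simp add: K.subset subsetD)
    then have "x \<otimes> inv k \<in> K" using ker x k K.subset by (auto simp: kernel_def)
    then have "x \<otimes> inv k \<otimes> k \<in> K" using k by blast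
    then show "x \<in> K" using x k K.subset by (simp add: G.m_assoc subsetD)
  qed
qed (use K subgroup.subset in blast)

lemma fin_index_subgroup_image:
  assumes surj: "h ` carrier G = carrier H" and K: "fin_index_subgroup G K"
  shows "fin_index_subgroup H (h ` K)"
proof -
  have Ks: "subgroup K G" and fin: "finite (rcosets\<^bsub>G\<^esub> K)"
    using K by (auto simp: fin_index_subgroup_def)
  have "rcosets\<^bsub>H\<^esub> (h ` K) \<subseteq> (\<lambda>C. h ` C) ` (rcosets\<^bsub>G\<^esub> K)"
  proof
    fix R assume "R \<in> rcosets\<^bsub>H\<^esub> (h ` K)"
    then obtain y where "y \<in> carrier H" "R = (h ` K) #>\<^bsub>H\<^esub> y"
      by (auto simp: RCOSETS_def)
    moreover obtain g where "g \<in> carrier G" "y = h g"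
      using surj \<open>y \<in> carrier H\<close> by auto
    ultimately have "R = h ` (K #>\<^bsub>G\<^esub> g)"
      using image_rcoset[OF subgroup.subset[OF Ks]] by simp
    moreover have "K #>\<^bsub>G\<^esub> g \<in> rcosets\<^bsub>G\<^esub> K"
      using \<open>g \<in> carrier G\<close> by (auto simp: RCOSETS_def)
    ultimately show "R \<in> (\<lambda>C. h ` C) ` (rcosets\<^bsub>G\<^esub> K)" by blast
  qed
  then have "finite (rcosets\<^bsub>H\<^esub> (h ` K))"
    using fin finite_subset by blast
  then show ?thesis
    using subgroup_img_is_subgroup[OF Ks] by (simp add: fin_index_subgroup_def)
qed

lemma fin_index_subgroup_vimage:
  assumes L: "fin_index_subgroup H L"
  shows "fin_index_subgroup G (h -` L \<inter> carrier G)"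
proof -
  have Ls: "subgroup L H" and fin: "finite (rcosets\<^bsub>H\<^esub> L)"
    using L by (auto simp: fin_index_subgroup_def)
  have "rcosets\<^bsub>G\<^esub> (h -` L \<inter> carrier G) \<subseteq> (\<lambda>R. h -` R \<inter> carrier G) ` (rcosets\<^bsub>H\<^esub> L)"
  proof
    fix C assume "C \<in> rcosets\<^bsub>G\<^esub> (h -` L \<inter> carrier G)"
    then obtain g where "g \<in> carrier G" "C = (h -` L \<inter> carrier G) #>\<^bsub>G\<^esub> g"
      by (auto simp: RCOSETS_def)
    moreover have "L #>\<^bsub>H\<^esub> h g \<in> rcosets\<^bsub>H\<^esub> L"
      using \<open>g \<in> carrier G\<close> by (auto simp: RCOSETS_def)
    ultimately show "C \<in> (\<lambda>R. h -` R \<inter> carrier G) ` (rcosets\<^bsub>H\<^esub> L)"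
      using vimage_rcoset[OF Ls] by (simp add: rev_image_eqI)
  qed
  then have "finite (rcosets\<^bsub>G\<^esub> (h -` L \<inter> carrier G))"
    using fin finite_subset by blast
  then show ?thesis
    using subgroup_vimage[OF Ls] by (simp add: fin_index_subgroup_def)
qed

theorem bij_betw_fin_index_subgroups:
  assumes surj: "h ` carrier G = carrier H"
  shows "bij_betw (\<lambda>K. h ` K) {K. fin_index_subgroup G K \<and> kernel G H h \<subseteq> K}
    {L. fin_index_subgroup H L}"
proof (rule bij_betw_byWitness[where f' = "\<lambda>L. h -` L \<inter> carrier G"])
  show "\<forall>K \<in> {K. fin_index_subgroup G K \<and> kernel G H h \<subseteq> K}. h -` (h ` K) \<inter> carrier G = K"
    by (auto simp: fin_index_subgroup_def vimage_image_subgroup)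
  show "\<forall>L \<in> {L. fin_index_subgroup H L}. h ` (h -` L \<inter> carrier G) = L"
  proof
    fix L assume "L \<in> {L. fin_index_subgroup H L}"
    then have "L \<subseteq> carrier H" by (simp add: fin_index_subgroup_def subgroup.subset)
    show "h ` (h -` L \<inter> carrier G) = L"
    proof
      show "L \<subseteq> h ` (h -` L \<inter> carrier G)"
      proof
        fix y assume "y \<in> L"
        then obtain g where "g \<in> carrier G" "y = h g"
          using surj \<open>L \<subseteq> carrier H\<close> by (metis imageE subsetD)
        then show "y \<in> h ` (h -` L \<inter> carrier G)" using \<open>y \<in> L\<close> by blast
      qed
    qed blast
  qed
  show "(\<lambda>K. h ` K) ` {K. fin_index_subgroup G K \<and> kernel G H h \<subseteq> K} \<subseteq> {L. fin_index_subgroup H L}"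
    using fin_index_subgroup_image[OF surj] by auto
  show "(\<lambda>L. h -` L \<inter> carrier G) ` {L. fin_index_subgroup H L}
      \<subseteq> {K. fin_index_subgroup G K \<and> kernel G H h \<subseteq> K}"
    using fin_index_subgroup_vimage
    by (auto simp: kernel_def fin_index_subgroup_def subgroup.one_closed)
qed

end


section \<open>The group \<open>G0\<close>\<close>

lemma carrier_BijGroup_UNIV: "carrier (BijGroup UNIV) = {f. bij f}"
  by (auto simp: BijGroup_def Bij_def bij_betw_def)

lemma mult_BijGroup_UNIV: "bij f \<Longrightarrow> bij g \<Longrightarrow> f \<otimes>\<^bsub>BijGroup UNIV\<^esub> g = f \<circ> g"
  by (auto simp: BijGroup_def compose_def o_def restrict_def Bij_def bij_betw_def)

lemma one_BijGroup_UNIV: "\<one>\<^bsub>BijGroup UNIV\<^esub> = id"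
  by (simp add: BijGroup_def id_def restrict_def)

lemma inv_BijGroup_UNIV: "bij f \<Longrightarrow> inv\<^bsub>BijGroup UNIV\<^esub> f = inv_into UNIV f"
  by (subst inv_BijGroup) (auto simp: Bij_def bij_betw_def)

definition translation :: "int \<Rightarrow> real \<Rightarrow> real" where
  "translation n t = t + of_int n"

lemma translation_comp: "translation m \<circ> translation n = translation (m + n)"
  by (auto simp: translation_def)

lemma bij_translation: "bij (translation n)"
  by (rule bij_betwI[where g = "translation (- n)"]) (auto simp: translation_def)

lemma inv_translation: "inv_into UNIV (translation n) = translation (- n)"
  by (rule inv_equality) (auto simp: translation_def)

lemma gen_a_eq_translation: "gen_a = translation 1"
  by (auto simp: gen_a_def translation_def)

definition gen_b_inv :: "real \<Rightarrow> real" where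
  "gen_b_inv t = (if t \<le> 0 then t else if t \<le> 1 then t / (1 + t)
                  else if t \<le> 2 then 1 / (3 - t) else t - 1)"

definition gen_c_inv :: "real \<Rightarrow> real" where
  "gen_c_inv t = (if 0 \<le> t \<and> t \<le> 1 then t / (2 - t) else t)"

lemma gen_b_gen_b_inv: "gen_b (gen_b_inv t) = t"
proof -
  consider "t \<le> 0" | "0 < t" "t \<le> 1" | "1 < t" "t \<le> 2" | "2 < t" by linarith
  then show ?thesis
  proof cases
    case 2
    then have "0 < t / (1 + t)" "t / (1 + t) \<le> 1/2" by (simp_all add: field_simps)
    then show ?thesis using 2 by (simp add: gen_b_inv_def gen_b_def field_simps)
  next
    case 3
    then have "1/2 < 1 / (3 - t)" "1 / (3 - t) \<le> 1" by (simp_all add: field_simps)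
    then show ?thesis using 3 by (simp add: gen_b_inv_def gen_b_def field_simps)
  qed (auto simp: gen_b_inv_def gen_b_def)
qed

lemma gen_b_inv_gen_b: "gen_b_inv (gen_b t) = t"
proof -
  consider "t \<le> 0" | "0 < t" "t \<le> 1/2" | "1/2 < t" "t \<le> 1" | "1 < t" by linarith
  then show ?thesis
  proof cases
    case 2
    then have "0 < t / (1 - t)" "t / (1 - t) \<le> 1" by (simp_all add: field_simps)
    then show ?thesis using 2 by (simp add: gen_b_inv_def gen_b_def field_simps)
  next
    case 3
    then have "1 < (3*t - 1) / t" "(3*t - 1) / t \<le> 2" by (simp_all add: field_simps)
    then show ?thesis using 3 by (simp add: gen_b_inv_def gen_b_def field_simps)
  qed (auto simp: gen_b_inv_def gen_b_def)
qed

lemma gen_c_gen_c_inv: "gen_c (gen_c_inv t) = t"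
proof (cases "0 \<le> t \<and> t \<le> 1")
  case True
  then have "0 \<le> t / (2 - t)" "t / (2 - t) \<le> 1" by (auto simp: field_simps)
  then show ?thesis using True by (simp add: gen_c_inv_def gen_c_def field_simps)
qed (auto simp: gen_c_inv_def gen_c_def)

lemma gen_c_inv_gen_c: "gen_c_inv (gen_c t) = t"
proof (cases "0 \<le> t \<and> t \<le> 1")
  case True
  then have "0 \<le> 2*t / (t + 1)" "2*t / (t + 1) \<le> 1" by (auto simp: field_simps)
  then show ?thesis using True by (simp add: gen_c_inv_def gen_c_def field_simps)
qed (auto simp: gen_c_inv_def gen_c_def)

lemma bij_gen_b: "bij gen_b"
  by (rule bij_betwI[where g = gen_b_inv]) (auto simp: gen_b_gen_b_inv gen_b_inv_gen_b)

lemma bij_gen_c: "bij gen_c"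
  by (rule bij_betwI[where g = gen_c_inv]) (auto simp: gen_c_gen_c_inv gen_c_inv_gen_c)

lemma bij_gen_b_inv: "bij gen_b_inv"
  by (rule bij_betwI[where g = gen_b]) (auto simp: gen_b_gen_b_inv gen_b_inv_gen_b)

lemma bij_gen_c_inv: "bij gen_c_inv"
  by (rule bij_betwI[where g = gen_c]) (auto simp: gen_c_gen_c_inv gen_c_inv_gen_c)

lemma inv_gen_b: "inv_into UNIV gen_b = gen_b_inv"
  by (rule inv_equality) (auto simp: gen_b_gen_b_inv gen_b_inv_gen_b)

lemma inv_gen_c: "inv_into UNIV gen_c = gen_c_inv"
  by (rule inv_equality) (auto simp: gen_c_gen_c_inv gen_c_inv_gen_c)

lemma subgroup_G0: "subgroup (carrier G0) (BijGroup UNIV)"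
  using bij_translation bij_gen_b bij_gen_c
  by (auto simp: G0_def gen_a_eq_translation carrier_BijGroup_UNIV
      intro!: group.generate_is_subgroup group_BijGroup)

lemma group_G0: "group G0"
  using group.subgroup_imp_group[OF group_BijGroup subgroup_G0] by (simp add: G0_def)

interpretation G0: group G0
  by (rule group_G0)

lemma bij_of_G0: "f \<in> carrier G0 \<Longrightarrow> bij f"
  using subgroup.subset[OF subgroup_G0] by (auto simp: carrier_BijGroup_UNIV)

lemma G0_mult: "f \<in> carrier G0 \<Longrightarrow> g \<in> carrier G0 \<Longrightarrow> f \<otimes>\<^bsub>G0\<^esub> g = f \<circ> g"
  using mult_BijGroup_UNIV[OF bij_of_G0 bij_of_G0] by (simp add: G0_def)

lemma G0_one: "\<one>\<^bsub>G0\<^esub> = id"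
  by (simp add: G0_def one_BijGroup_UNIV)

lemma G0_inv: "f \<in> carrier G0 \<Longrightarrow> inv\<^bsub>G0\<^esub> f = inv_into UNIV f"
proof -
  assume f: "f \<in> carrier G0"
  have "inv\<^bsub>G0\<^esub> f = inv\<^bsub>BijGroup UNIV\<lparr>carrier := carrier G0\<rparr>\<^esub> f"
    by (simp add: G0_def)
  also have "\<dots> = inv\<^bsub>BijGroup UNIV\<^esub> f"
    by (rule group.m_inv_consistent[OF group_BijGroup subgroup_G0 f])
  finally show ?thesis using inv_BijGroup_UNIV[OF bij_of_G0[OF f]] by simp
qed

lemma generators_in_G0: "gen_a \<in> carrier G0" "gen_b \<in> carrier G0" "gen_c \<in> carrier G0"
  by (auto simp: G0_def intro: generate.incl)

lemma generate_G0: "generate G0 {gen_a, gen_b, gen_c} = carrier G0"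
  using group.generate_consistent[OF group_BijGroup _ subgroup_G0] generators_in_G0
  by (simp add: G0_def)

lemma G0_comp_closed: "f \<in> carrier G0 \<Longrightarrow> g \<in> carrier G0 \<Longrightarrow> f \<circ> g \<in> carrier G0"
  using G0.m_closed G0_mult by metis

lemma G0_inv_closed: "f \<in> carrier G0 \<Longrightarrow> inv_into UNIV f \<in> carrier G0"
  using G0.inv_closed G0_inv by metis

lemma G0_commutator:
  "f \<in> carrier G0 \<Longrightarrow> g \<in> carrier G0 \<Longrightarrow> commutator G0 f g = f \<circ> g \<circ> inv_into UNIV f \<circ> inv_into UNIV g"
  by (simp add: commutator_def G0_mult G0_inv G0_comp_closed G0_inv_closed)

lemma gen_b_inv_in_G0: "gen_b_inv \<in> carrier G0"
  using G0_inv_closed generators_in_G0 inv_gen_b by metis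

lemma gen_a_pow: "gen_a [^]\<^bsub>G0\<^esub> (n::nat) = translation (int n)"
proof (induction n)
  case 0 then show ?case by (auto simp: G0_one translation_def)
next
  case (Suc n)
  have "gen_a [^]\<^bsub>G0\<^esub> Suc n = gen_a [^]\<^bsub>G0\<^esub> n \<otimes>\<^bsub>G0\<^esub> gen_a"
    by simp
  also have "\<dots> = translation (int n) \<circ> gen_a"
    using Suc G0.nat_pow_closed[OF generators_in_G0(1), of n] generators_in_G0(1)
    by (simp add: G0_mult)
  finally show ?case by (simp add: gen_a_eq_translation translation_comp add.commute)
qed

lemma translation_in_G0: "translation n \<in> carrier G0"
proof -
  have "translation (int k) \<in> carrier G0" for k
    using G0.nat_pow_closed[OF generators_in_G0(1)] by (simp add: gen_a_pow)
  moreover have "translation (- int k) \<in> carrier G0" for k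
    using G0_inv_closed[OF \<open>translation (int k) \<in> carrier G0\<close>] by (simp add: inv_translation)
  ultimately show ?thesis
    by (cases "0 \<le> n") (metis nonneg_int_cases, metis minus_minus nonneg_int_cases neg_0_le_iff_le nle_le)
qed


section \<open>Supports and the derived subgroup\<close>

definition fixes_pointwise :: "('a \<Rightarrow> 'a) \<Rightarrow> 'a set \<Rightarrow> bool" where
  "fixes_pointwise f S \<longleftrightarrow> (\<forall>t\<in>S. f t = t)"

lemma commute_if_fixes_pointwise_complements:
  assumes inj: "inj f" "inj g" and fixed: "fixes_pointwise f S" "fixes_pointwise g (- S)"
  shows "f \<circ> g = g \<circ> f"
proof
  fix t
  show "(f \<circ> g) t = (g \<circ> f) t"
  proof (cases "t \<in> S")
    case True
    have "g t \<in> S"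
    proof (rule ccontr)
      assume "g t \<notin> S"
      then have "g (g t) = g t" using fixed(2) by (simp add: fixes_pointwise_def)
      then show False using inj(2) True \<open>g t \<notin> S\<close> by (metis injD)
    qed
    then show ?thesis using True fixed(1) by (simp add: fixes_pointwise_def)
  next
    case False
    have "f t \<notin> S"
    proof
      assume "f t \<in> S"
      then have "f (f t) = f t" using fixed(1) by (simp add: fixes_pointwise_def)
      then show False using inj(1) False \<open>f t \<in> S\<close> by (metis injD)
    qed
    then show ?thesis using False fixed(2) by (simp add: fixes_pointwise_def)
  qed
qed

lemma fixes_pointwise_mono: "S' \<subseteq> S \<Longrightarrow> fixes_pointwise f S \<Longrightarrow> fixes_pointwise f S'"
  by (auto simp: fixes_pointwise_def)

lemma fixes_pointwise_inv:
  "bij f \<Longrightarrow> fixes_pointwise f S \<Longrightarrow> fixes_pointwise (inv_into UNIV f) S"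
  by (metis bij_inv_eq_iff fixes_pointwise_def)

lemma commute_if_fixes_halflines:
  fixes m :: "'a :: linorder"
  assumes "inj f" "inj g" "fixes_pointwise f {m..}" "fixes_pointwise g {..m}"
  shows "f \<circ> g = g \<circ> f"
proof (rule commute_if_fixes_pointwise_complements[OF assms(2,1) assms(4), symmetric])
  show "fixes_pointwise f (- {..m})"
    using assms(3) by (rule fixes_pointwise_mono[rotated]) (auto simp: not_le)
qed

definition shift_conj :: "int \<Rightarrow> (real \<Rightarrow> real) \<Rightarrow> real \<Rightarrow> real" where
  "shift_conj n f = translation n \<circ> f \<circ> translation (- n)"

lemma shift_conj_in_G0: "f \<in> carrier G0 \<Longrightarrow> shift_conj n f \<in> carrier G0"
  by (simp add: shift_conj_def G0_comp_closed translation_in_G0)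

lemma fixes_pointwise_shift_conj_atLeast:
  "fixes_pointwise f {m..} \<Longrightarrow> fixes_pointwise (shift_conj n f) {m + of_int n..}"
  by (auto simp: fixes_pointwise_def shift_conj_def translation_def)

lemma fixes_pointwise_shift_conj_atMost:
  "fixes_pointwise f {..m} \<Longrightarrow> fixes_pointwise (shift_conj n f) {..m + of_int n}"
  by (auto simp: fixes_pointwise_def shift_conj_def translation_def)

lemma G0_commutator_translation:
  "x \<in> carrier G0 \<Longrightarrow> commutator G0 (translation n) (inv_into UNIV x) = shift_conj n (inv_into UNIV x) \<circ> x"
  by (simp add: shift_conj_def G0_commutator G0_inv_closed translation_in_G0 inv_translation bij_of_G0
      inv_inv_eq o_assoc)

lemma gen_b_fixes: "fixes_pointwise gen_b {..0}"
  by (simp add: fixes_pointwise_def gen_b_def)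

lemma gen_c_fixes: "fixes_pointwise gen_c {..0}" "fixes_pointwise gen_c {1..}"
  by (auto simp: fixes_pointwise_def gen_c_def)

lemma gen_a_gen_b_inv_fixes: "fixes_pointwise (gen_a \<circ> gen_b_inv) {2..}"
  by (auto simp: fixes_pointwise_def gen_a_def gen_b_inv_def)

lemma gen_b_inv_gen_a_fixes: "fixes_pointwise (gen_b_inv \<circ> gen_a) {1..}"
  by (auto simp: fixes_pointwise_def gen_a_def gen_b_inv_def)

lemma gen_b_inv_gen_a_in_G0: "gen_a \<circ> gen_b_inv \<in> carrier G0" "gen_b_inv \<circ> gen_a \<in> carrier G0"
  using G0_comp_closed generators_in_G0(1) gen_b_inv_in_G0 by auto

text \<open>Modulo a normal subgroup, the three commutators \<open>[x, y]\<close> listed here already force all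
  generators to commute. Conjugating \<open>x\<close> by the translation by \<open>n\<close> moves its support off that
  of \<open>y\<close>.\<close>

definition commutator_witnesses :: "int \<Rightarrow> ((real \<Rightarrow> real) \<times> (real \<Rightarrow> real) \<times> int) set" where
  "commutator_witnesses s =
    {(gen_c, gen_b, - s), (gen_a \<circ> gen_b_inv, gen_b, - s), (gen_c, gen_b_inv \<circ> gen_a, s)}"

lemma commutator_witnesses_in_G0:
  "(x, y, n) \<in> commutator_witnesses s \<Longrightarrow> x \<in> carrier G0 \<and> y \<in> carrier G0"
  using generators_in_G0 gen_b_inv_gen_a_in_G0 by (auto simp: commutator_witnesses_def)

lemma derived_G0_subset_normal_if_witnesses:
  assumes N: "N \<lhd> G0"
    and witness: "\<And>x y n. (x, y, n) \<in> commutator_witnesses s \<Longrightarrow> commutator G0 x y \<in> N"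
  shows "derived G0 (carrier G0) \<subseteq> N"
proof -
  note gens = generators_in_G0 gen_b_inv_in_G0 gen_b_inv_gen_a_in_G0
  have diagonal: "commutator G0 f f \<in> N" if "f \<in> carrier G0" for f
    using that N by (simp add: G0.commutator_of_commuting normal_def subgroup.one_closed)
  have cb: "commutator G0 gen_c gen_b \<in> N"
    by (rule witness[of _ _ "- s"]) (simp add: commutator_witnesses_def)
  have "commutator G0 (gen_a \<circ> gen_b_inv) gen_b \<in> N"
    by (rule witness[of _ _ "- s"]) (simp add: commutator_witnesses_def)
  moreover have "gen_a = (gen_a \<circ> gen_b_inv) \<otimes>\<^bsub>G0\<^esub> gen_b"
    using gens by (auto simp: G0_mult gen_b_inv_gen_b)
  ultimately have ab: "commutator G0 gen_a gen_b \<in> N"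
    using G0.commutator_in_normal_mult_left[OF N] gens diagonal by metis
  have "commutator G0 gen_c (gen_b_inv \<circ> gen_a) \<in> N"
    by (rule witness[of _ _ s]) (simp add: commutator_witnesses_def)
  then have "commutator G0 (gen_b_inv \<circ> gen_a) gen_c \<in> N" "commutator G0 gen_b gen_c \<in> N"
    using G0.commutator_in_normal_swap[OF N] gens cb by blast+
  moreover have "gen_a = gen_b \<otimes>\<^bsub>G0\<^esub> (gen_b_inv \<circ> gen_a)"
    using gens by (auto simp: G0_mult gen_b_gen_b_inv)
  ultimately have ac: "commutator G0 gen_a gen_c \<in> N"
    using G0.commutator_in_normal_mult_left[OF N] gens by metis
  show ?thesis
  proof (rule G0.derived_subset_normal_if_generators_commute[OF N _ generate_G0])
    fix f g assume "f \<in> {gen_a, gen_b, gen_c}" "g \<in> {gen_a, gen_b, gen_c}"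
    then show "commutator G0 f g \<in> N"
      using cb ab ac gens diagonal G0.commutator_in_normal_swap[OF N] by auto
  qed (use gens in auto)
qed

lemma commutator_witness_in_normal:
  assumes N: "N \<lhd> G0" and s: "2 \<le> s" and w: "(x, y, n) \<in> commutator_witnesses s"
    and nested: "commutator G0 (commutator G0 (translation n) (inv_into UNIV x)) y \<in> N"
  shows "commutator G0 x y \<in> N"
proof (rule G0.commutator_in_normal_via_conjugate[OF N _ _ translation_in_G0])
  show x: "x \<in> carrier G0" and y: "y \<in> carrier G0"
    using commutator_witnesses_in_G0[OF w] by auto
  show "commutator G0 (commutator G0 (translation n) (inv\<^bsub>G0\<^esub> x)) y \<in> N"
    using nested x by (simp add: G0_inv)
  have "fixes_pointwise (shift_conj n x) {0..} \<and> fixes_pointwise y {..0}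
    \<or> fixes_pointwise (shift_conj n x) {..1} \<and> fixes_pointwise y {1..}"
  proof -
    have "fixes_pointwise (shift_conj (- s) gen_c) {0..}"
      using fixes_pointwise_mono[OF _ fixes_pointwise_shift_conj_atLeast[OF gen_c_fixes(2)]] s by simp
    moreover have "fixes_pointwise (shift_conj (- s) (gen_a \<circ> gen_b_inv)) {0..}"
      using fixes_pointwise_mono[OF _ fixes_pointwise_shift_conj_atLeast[OF gen_a_gen_b_inv_fixes]] s
      by simp
    moreover have "fixes_pointwise (shift_conj s gen_c) {..1}"
      using fixes_pointwise_mono[OF _ fixes_pointwise_shift_conj_atMost[OF gen_c_fixes(1)]] s by simp
    ultimately show ?thesis
      using w gen_b_fixes gen_b_inv_gen_a_fixes by (auto simp: commutator_witnesses_def)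
  qed
  then have "shift_conj n x \<circ> y = y \<circ> shift_conj n x"
    using x y commute_if_fixes_halflines by (metis bij_is_inj bij_of_G0 shift_conj_in_G0)
  then show "translation n \<otimes>\<^bsub>G0\<^esub> x \<otimes>\<^bsub>G0\<^esub> inv\<^bsub>G0\<^esub> translation n \<otimes>\<^bsub>G0\<^esub> y =
      y \<otimes>\<^bsub>G0\<^esub> (translation n \<otimes>\<^bsub>G0\<^esub> x \<otimes>\<^bsub>G0\<^esub> inv\<^bsub>G0\<^esub> translation n)"
    using x y translation_in_G0 by (simp add: shift_conj_def G0_mult G0_inv G0_comp_closed inv_translation)
qed

lemma derived_G0_subset_fin_index_subgroup:
  assumes K: "fin_index_subgroup G0 K"
  shows "derived G0 (carrier G0) \<subseteq> K"
proof -
  have Ks: "subgroup K G0" using K by (simp add: fin_index_subgroup_def)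
  define N where "N = G0.normal_core K"
  have N: "N \<lhd> G0" unfolding N_def by (rule G0.normal_core_normal[OF Ks])
  interpret N: normal N G0 by (rule N)
  obtain m :: nat where "m > 0" "translation (int m) \<in> N"
    using G0.pow_in_normal_core[OF K generators_in_G0(1)] by (auto simp: N_def gen_a_pow)
  define s where "s = 2 * int m"
  have "translation s = translation (int m) \<otimes>\<^bsub>G0\<^esub> translation (int m)"
    by (simp add: G0_mult translation_in_G0 translation_comp s_def)
  then have "translation s \<in> N" using \<open>translation (int m) \<in> N\<close> by simp
  moreover have "translation (- s) = inv\<^bsub>G0\<^esub> translation s"
    by (simp add: G0_inv translation_in_G0 inv_translation)
  ultimately have shifts_in_N: "translation s \<in> N" "translation (- s) \<in> N" by simp_all
  have "commutator G0 x y \<in> N" if w: "(x, y, n) \<in> commutator_witnesses s" for x y n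
  proof (rule commutator_witness_in_normal[OF N _ w])
    show "2 \<le> s" using \<open>m > 0\<close> by (simp add: s_def)
    have "translation n \<in> N" using w shifts_in_N by (auto simp: commutator_witnesses_def)
    then show "commutator G0 (commutator G0 (translation n) (inv_into UNIV x)) y \<in> N"
      using commutator_witnesses_in_G0[OF w] G0_inv_closed
      by (simp add: G0.commutator_in_normal_if_left_in[OF N])
  qed
  then have "derived G0 (carrier G0) \<subseteq> N"
    by (rule derived_G0_subset_normal_if_witnesses[OF N])
  then show ?thesis using G0.normal_core_subset[OF Ks] by (auto simp: N_def)
qed

lemma nested_witness_supports:
  assumes w: "(x, y, n) \<in> commutator_witnesses 2"
  shows "\<exists>m l. fixes_pointwise (shift_conj n (inv_into UNIV x) \<circ> x) {l..}
      \<and> fixes_pointwise (shift_conj m (inv_into UNIV y)) {..l}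
    \<or> fixes_pointwise (shift_conj n (inv_into UNIV x) \<circ> x) {..l}
      \<and> fixes_pointwise (shift_conj m (inv_into UNIV y)) {l..}"
proof -
  have bij: "bij (gen_a \<circ> gen_b_inv)" "bij (gen_b_inv \<circ> gen_a)"
    using gen_b_inv_gen_a_in_G0 bij_of_G0 by blast+
  note atLeast = fixes_pointwise_shift_conj_atLeast[OF fixes_pointwise_inv]
  note atMost = fixes_pointwise_shift_conj_atMost[OF fixes_pointwise_inv]
  from w consider "x = gen_c" "y = gen_b" "n = -2" | "x = gen_a \<circ> gen_b_inv" "y = gen_b" "n = -2"
    | "x = gen_c" "y = gen_b_inv \<circ> gen_a" "n = 2"
    by (auto simp: commutator_witnesses_def)
  then show ?thesis
  proof cases
    case 1
    have "fixes_pointwise (shift_conj n (inv_into UNIV x) \<circ> x) {1..}"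
      using 1 atLeast[OF bij_gen_c gen_c_fixes(2), of "-2"] gen_c_fixes(2)
      by (simp add: fixes_pointwise_def)
    moreover have "fixes_pointwise (shift_conj 2 (inv_into UNIV y)) {..1}"
      using 1 atMost[OF bij_gen_b gen_b_fixes, of 2] by (simp add: fixes_pointwise_def)
    ultimately show ?thesis by blast
  next
    case 2
    have "fixes_pointwise (shift_conj n (inv_into UNIV x) \<circ> x) {2..}"
      using 2 atLeast[OF bij(1) gen_a_gen_b_inv_fixes, of "-2"] gen_a_gen_b_inv_fixes
      by (simp add: fixes_pointwise_def)
    moreover have "fixes_pointwise (shift_conj 2 (inv_into UNIV y)) {..2}"
      using 2 atMost[OF bij_gen_b gen_b_fixes, of 2] by simp
    ultimately show ?thesis by blast
  next
    case 3
    have "fixes_pointwise (shift_conj n (inv_into UNIV x) \<circ> x) {..0}"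
      using 3 atMost[OF bij_gen_c gen_c_fixes(1), of 2] gen_c_fixes(1)
      by (simp add: fixes_pointwise_def)
    moreover have "fixes_pointwise (shift_conj (-1) (inv_into UNIV y)) {0..}"
      using 3 atLeast[OF bij(2) gen_b_inv_gen_a_fixes, of "-1"] by simp
    ultimately show ?thesis by blast
  qed
qed

lemma derived_G0_perfect: "derived G0 (carrier G0) \<subseteq> derived G0 (derived G0 (carrier G0))"
proof (rule derived_G0_subset_normal_if_witnesses[OF G0.derived_is_normal[OF G0.derived_self_is_normal]])
  fix x y n assume w: "(x, y, n) \<in> commutator_witnesses 2"
  have x: "x \<in> carrier G0" and y: "y \<in> carrier G0"
    using commutator_witnesses_in_G0[OF w] by auto
  define h where "h = commutator G0 (translation n) (inv_into UNIV x)"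
  have h: "h \<in> derived G0 (carrier G0)"
    using x by (simp add: h_def G0.commutator_in_derived G0_inv_closed translation_in_G0)
  then have hc: "h \<in> carrier G0"
    using G0.derived_in_carrier by blast
  have inj: "inj h" "inj (shift_conj m (inv_into UNIV y))" for m
    using x y by (simp_all add: h_def bij_is_inj bij_of_G0 shift_conj_in_G0 G0_inv_closed translation_in_G0)
  obtain m l where "fixes_pointwise h {l..} \<and> fixes_pointwise (shift_conj m (inv_into UNIV y)) {..l}
    \<or> fixes_pointwise h {..l} \<and> fixes_pointwise (shift_conj m (inv_into UNIV y)) {l..}"
    using nested_witness_supports[OF w] by (auto simp: h_def G0_commutator_translation[OF x])
  then have "shift_conj m (inv_into UNIV y) \<circ> h = h \<circ> shift_conj m (inv_into UNIV y)"
    using inj commute_if_fixes_halflines by metis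
  then have "commutator G0 h y \<in> derived G0 (derived G0 (carrier G0))"
    using G0.commutator_in_second_derived[OF h y translation_in_G0[of m]] hc y
    by (simp add: shift_conj_def G0_mult G0_inv G0_inv_closed G0_comp_closed translation_in_G0
        inv_translation)
  then show "commutator G0 x y \<in> derived G0 (derived G0 (carrier G0))"
    using commutator_witness_in_normal[OF G0.derived_is_normal[OF G0.derived_self_is_normal] _ w]
    by (simp add: h_def)
qed


section \<open>Tame homeomorphisms\<close>

definition right_deriv :: "(real \<Rightarrow> real) \<Rightarrow> real \<Rightarrow> real" where
  "right_deriv g x = (THE D. (g has_real_derivative D) (at x within {x..}))"

definition left_deriv :: "(real \<Rightarrow> real) \<Rightarrow> real \<Rightarrow> real" where
  "left_deriv g x = (THE D. (g has_real_derivative D) (at x within {..x}))"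

lemma right_deriv_eq: "(g has_real_derivative D) (at x within {x..}) \<Longrightarrow> right_deriv g x = D"
  unfolding right_deriv_def
  by (rule the_equality)
     (auto intro: has_field_derivative_unique simp: at_within_Ici_at_right)

lemma left_deriv_eq: "(g has_real_derivative D) (at x within {..x}) \<Longrightarrow> left_deriv g x = D"
  unfolding left_deriv_def
  by (rule the_equality)
     (auto intro: has_field_derivative_unique simp: at_within_Iic_at_left)

definition tame_at :: "real set \<Rightarrow> (real \<Rightarrow> real) \<Rightarrow> real \<Rightarrow> bool" where
  "tame_at F g x \<longleftrightarrow> (\<exists>L>0. \<exists>R>0. (g has_real_derivative L) (at x within {..x}) \<and>
     (g has_real_derivative R) (at x within {x..}) \<and> (x \<notin> F \<longrightarrow> L = R))"

definition tame :: "(real \<Rightarrow> real) \<Rightarrow> bool" where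
  "tame g \<longleftrightarrow> bij g \<and> mono g \<and> (\<exists>F. finite F \<and> (\<forall>x. tame_at F g x)) \<and>
     (\<exists>m::int. \<exists>M. \<forall>t\<le>M. g t = t + of_int m) \<and> (\<exists>m::int. \<exists>M. \<forall>t\<ge>M. g t = t + of_int m)"

lemma tameI:
  assumes "bij g" "mono g" "finite F" "\<And>x. tame_at F g x"
    and "\<And>t. t \<le> M \<Longrightarrow> g t = t + of_int m" "\<And>t. t \<ge> M' \<Longrightarrow> g t = t + of_int m'"
  shows "tame g"
  unfolding tame_def using assms by blast

definition breakpoints :: "(real \<Rightarrow> real) \<Rightarrow> real set" where
  "breakpoints g = {x. right_deriv g x \<noteq> left_deriv g x}"

lemma tame_atD:
  assumes "tame_at F g x"
  shows "(g has_real_derivative left_deriv g x) (at x within {..x})" "left_deriv g x > 0"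
    and "(g has_real_derivative right_deriv g x) (at x within {x..})" "right_deriv g x > 0"
    and "x \<notin> F \<Longrightarrow> x \<notin> breakpoints g"
proof -
  obtain L R where LR: "L > 0" "R > 0" "(g has_real_derivative L) (at x within {..x})"
    "(g has_real_derivative R) (at x within {x..})" "x \<notin> F \<longrightarrow> L = R"
    using assms unfolding tame_at_def by blast
  moreover have "left_deriv g x = L" "right_deriv g x = R"
    using LR by (simp_all add: left_deriv_eq right_deriv_eq)
  ultimately show "(g has_real_derivative left_deriv g x) (at x within {..x})" "left_deriv g x > 0"
    "(g has_real_derivative right_deriv g x) (at x within {x..})" "right_deriv g x > 0"
    "x \<notin> F \<Longrightarrow> x \<notin> breakpoints g"
    by (auto simp: breakpoints_def)
qed

lemma breakpoints_subset: "(\<And>x. tame_at F g x) \<Longrightarrow> breakpoints g \<subseteq> F"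
  using tame_atD(5) by blast

lemma tameD:
  assumes "tame g"
  shows "bij g" "mono g" "finite (breakpoints g)"
    and "(g has_real_derivative left_deriv g x) (at x within {..x})" "left_deriv g x > 0"
    and "(g has_real_derivative right_deriv g x) (at x within {x..})" "right_deriv g x > 0"
proof -
  obtain F where "finite F" "\<And>x. tame_at F g x"
    using assms unfolding tame_def by blast
  then show "finite (breakpoints g)"
    using breakpoints_subset finite_subset by metis
  show "(g has_real_derivative left_deriv g x) (at x within {..x})" "left_deriv g x > 0"
    "(g has_real_derivative right_deriv g x) (at x within {x..})" "right_deriv g x > 0"
    using \<open>\<And>x. tame_at F g x\<close> tame_atD(1-4) by blast+
qed (use assms tame_def in auto)

lemma right_deriv_comp:
  assumes "tame g" "tame h"
  shows "((g \<circ> h) has_real_derivative right_deriv g (h x) * right_deriv h x) (at x within {x..})"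
proof (rule DERIV_image_chain)
  have "h ` {x..} \<subseteq> {h x..}" using tameD(2)[OF assms(2)] by (auto dest: monoD)
  then show "(g has_real_derivative right_deriv g (h x)) (at (h x) within h ` {x..})"
    using tameD(6)[OF assms(1)] DERIV_subset by blast
qed (rule tameD(6)[OF assms(2)])

lemma left_deriv_comp:
  assumes "tame g" "tame h"
  shows "((g \<circ> h) has_real_derivative left_deriv g (h x) * left_deriv h x) (at x within {..x})"
proof (rule DERIV_image_chain)
  have "h ` {..x} \<subseteq> {..h x}" using tameD(2)[OF assms(2)] by (auto dest: monoD)
  then show "(g has_real_derivative left_deriv g (h x)) (at (h x) within h ` {..x})"
    using tameD(4)[OF assms(1)] DERIV_subset by blast
qed (rule tameD(4)[OF assms(2)])

lemma tame_at_comp: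
  assumes "tame g" "tame h"
  shows "tame_at (breakpoints h \<union> inv_into UNIV h ` breakpoints g) (g \<circ> h) x"
proof -
  let ?L = "left_deriv g (h x) * left_deriv h x" and ?R = "right_deriv g (h x) * right_deriv h x"
  have "?L > 0" "?R > 0"
    using tameD(5,7)[OF assms(1)] tameD(5,7)[OF assms(2)] by simp_all
  moreover have "?L = ?R" if "x \<notin> breakpoints h \<union> inv_into UNIV h ` breakpoints g"
  proof -
    have "h x \<notin> breakpoints g"
      using that tameD(1)[OF assms(2)] by (metis UnCI bij_is_inj image_eqI inv_f_f)
    then show ?thesis using that by (simp add: breakpoints_def)
  qed
  ultimately show ?thesis
    unfolding tame_at_def using left_deriv_comp[OF assms] right_deriv_comp[OF assms] by blast
qed

lemma translation_near_bot_comp: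
  fixes g h :: "real \<Rightarrow> real"
  assumes "\<forall>t\<le>Mg. g t = t + of_int mg" "\<forall>t\<le>Mh. h t = t + of_int mh"
  shows "\<forall>t\<le>min Mh (Mg - of_int mh). (g \<circ> h) t = t + of_int (mg + mh)"
  using assms by (auto simp: algebra_simps)

lemma translation_near_top_comp:
  fixes g h :: "real \<Rightarrow> real"
  assumes "\<forall>t\<ge>Mg. g t = t + of_int mg" "\<forall>t\<ge>Mh. h t = t + of_int mh"
  shows "\<forall>t\<ge>max Mh (Mg - of_int mh). (g \<circ> h) t = t + of_int (mg + mh)"
  using assms by (auto simp: algebra_simps)

lemma tame_comp:
  assumes g: "tame g" and h: "tame h"
  shows "tame (g \<circ> h)"
proof -
  have "bij (g \<circ> h)" using tameD(1)[OF g] tameD(1)[OF h] by (rule bij_comp[rotated])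
  moreover have "mono (g \<circ> h)"
    using tameD(2)[OF g] tameD(2)[OF h] by (simp add: monoD monoI)
  moreover have "finite (breakpoints h \<union> inv_into UNIV h ` breakpoints g)"
    using tameD(3)[OF g] tameD(3)[OF h] by blast
  moreover obtain mg Mg mh Mh where "\<forall>t\<le>Mg. g t = t + of_int mg" "\<forall>t\<le>Mh. h t = t + of_int mh"
    using g h unfolding tame_def by blast
  then have "\<exists>m::int. \<exists>M. \<forall>t\<le>M. (g \<circ> h) t = t + of_int m"
    using translation_near_bot_comp by blast
  moreover obtain mg' Mg' mh' Mh' where "\<forall>t\<ge>Mg'. g t = t + of_int mg'" "\<forall>t\<ge>Mh'. h t = t + of_int mh'"
    using g h unfolding tame_def by blast
  then have "\<exists>m::int. \<exists>M. \<forall>t\<ge>M. (g \<circ> h) t = t + of_int m"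
    using translation_near_top_comp by blast
  ultimately show ?thesis
    unfolding tame_def using tame_at_comp[OF g h] by blast
qed

definition bot_shift :: "(real \<Rightarrow> real) \<Rightarrow> int" where
  "bot_shift g = (THE m. \<exists>M. \<forall>t\<le>M. g t = t + of_int m)"

definition top_shift :: "(real \<Rightarrow> real) \<Rightarrow> int" where
  "top_shift g = (THE m. \<exists>M. \<forall>t\<ge>M. g t = t + of_int m)"

lemma bot_shift_eq: "\<forall>t\<le>M. g t = t + of_int m \<Longrightarrow> bot_shift g = m"
  unfolding bot_shift_def
proof (rule the_equality)
  fix m' assume m: "\<forall>t\<le>M. g t = t + of_int m" and "\<exists>M'. \<forall>t\<le>M'. g t = t + of_int m'"
  then obtain M' where "\<forall>t\<le>M'. g t = t + of_int m'" by blast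
  then have "min M M' + of_int m' = min M M' + of_int m"
    using m by (metis min.cobounded1 min.cobounded2)
  then show "m' = m" by simp
qed blast

lemma top_shift_eq: "\<forall>t\<ge>M. g t = t + of_int m \<Longrightarrow> top_shift g = m"
  unfolding top_shift_def
proof (rule the_equality)
  fix m' assume m: "\<forall>t\<ge>M. g t = t + of_int m" and "\<exists>M'. \<forall>t\<ge>M'. g t = t + of_int m'"
  then obtain M' where "\<forall>t\<ge>M'. g t = t + of_int m'" by blast
  then have "max M M' + of_int m' = max M M' + of_int m"
    using m by (metis max.cobounded1 max.cobounded2)
  then show "m' = m" by simp
qed blast

lemma bot_shift_comp:
  assumes g: "tame g" and h: "tame h"
  shows "bot_shift (g \<circ> h) = bot_shift g + bot_shift h"
proof -
  obtain mg Mg mh Mh where g0: "\<forall>t\<le>Mg. g t = t + of_int mg" and h0: "\<forall>t\<le>Mh. h t = t + of_int mh"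
    using g h unfolding tame_def by blast
  show ?thesis
    using bot_shift_eq[OF translation_near_bot_comp[OF g0 h0]] bot_shift_eq[OF g0] bot_shift_eq[OF h0]
    by (simp add: comp_def)
qed

lemma top_shift_comp:
  assumes g: "tame g" and h: "tame h"
  shows "top_shift (g \<circ> h) = top_shift g + top_shift h"
proof -
  obtain mg Mg mh Mh where g0: "\<forall>t\<ge>Mg. g t = t + of_int mg" and h0: "\<forall>t\<ge>Mh. h t = t + of_int mh"
    using g h unfolding tame_def by blast
  show ?thesis
    using top_shift_eq[OF translation_near_top_comp[OF g0 h0]] top_shift_eq[OF g0] top_shift_eq[OF h0]
    by (simp add: comp_def)
qed

definition log_jump :: "(real \<Rightarrow> real) \<Rightarrow> real \<Rightarrow> real" where
  "log_jump g x = (ln (right_deriv g x) - ln (left_deriv g x)) / ln 4"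

definition total_jump :: "(real \<Rightarrow> real) \<Rightarrow> real" where
  "total_jump g = (\<Sum>x\<in>breakpoints g. log_jump g x)"

lemma total_jump_eq_sum:
  assumes "finite F" "breakpoints g \<subseteq> F"
  shows "total_jump g = (\<Sum>x\<in>F. log_jump g x)"
  unfolding total_jump_def
  by (rule sum.mono_neutral_left[OF assms]) (auto simp: log_jump_def breakpoints_def)

lemma log_jump_comp:
  assumes "tame g" "tame h"
  shows "log_jump (g \<circ> h) x = log_jump g (h x) + log_jump h x"
proof -
  have pos: "right_deriv g (h x) > 0" "left_deriv g (h x) > 0" "right_deriv h x > 0" "left_deriv h x > 0"
    using tameD(5,7)[OF assms(1)] tameD(5,7)[OF assms(2)] by auto
  then show ?thesis
    using right_deriv_eq[OF right_deriv_comp[OF assms]] left_deriv_eq[OF left_deriv_comp[OF assms]]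
    by (simp add: log_jump_def ln_mult diff_divide_distrib add_divide_distrib)
qed

lemma total_jump_comp:
  assumes g: "tame g" and h: "tame h"
  shows "total_jump (g \<circ> h) = total_jump g + total_jump h"
proof -
  define F where "F = breakpoints h \<union> inv_into UNIV h ` breakpoints g"
  have F: "finite F" using tameD(3)[OF g] tameD(3)[OF h] by (simp add: F_def)
  have bij: "bij h" by (rule tameD(1)[OF h])
  have "total_jump (g \<circ> h) = (\<Sum>x\<in>F. log_jump (g \<circ> h) x)"
    using total_jump_eq_sum[OF F] breakpoints_subset[OF tame_at_comp[OF g h]] by (simp add: F_def)
  also have "\<dots> = (\<Sum>x\<in>F. log_jump g (h x)) + (\<Sum>x\<in>F. log_jump h x)"
    by (simp add: log_jump_comp[OF g h] sum.distrib)
  also have "(\<Sum>x\<in>F. log_jump g (h x)) = (\<Sum>y\<in>h ` F. log_jump g y)"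
    using sum.reindex[of h F "log_jump g"] bij by (metis bij_is_inj comp_apply inj_on_subset subset_UNIV sum.cong)
  also have "\<dots> = total_jump g"
  proof (rule total_jump_eq_sum[symmetric])
    show "breakpoints g \<subseteq> h ` F"
      using bij by (auto simp: F_def image_iff bij_is_surj surj_f_inv_f intro!: bexI[of _ "inv_into UNIV h _"])
  qed (use F in simp)
  also have "(\<Sum>x\<in>F. log_jump h x) = total_jump h"
    using F by (intro total_jump_eq_sum[symmetric]) (auto simp: F_def)
  finally show ?thesis .
qed


definition moebius :: "real \<Rightarrow> real \<Rightarrow> real \<Rightarrow> real \<Rightarrow> real \<Rightarrow> real" where
  "moebius p q r s t = (p * t + q) / (r * t + s)"

lemma moebius_has_real_derivative:
  "r * x + s \<noteq> 0 \<Longrightarrow> (moebius p q r s has_real_derivative (p * s - q * r) / (r * x + s)\<^sup>2) (at x)"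
  unfolding moebius_def
  by (auto intro!: derivative_eq_intros simp: field_simps power2_eq_square)

lemma has_derivative_within_atLeast_if_eq_near:
  assumes "(f has_real_derivative D) (at x)" "d > 0" "\<And>t. x \<le> t \<Longrightarrow> t < x + d \<Longrightarrow> g t = f t"
  shows "(g has_real_derivative D) (at x within {x..})"
  using assms(2,3)
  by (intro has_field_derivative_transform_within[OF has_field_derivative_at_within[OF assms(1)] assms(2)])
     (auto simp: dist_real_def)

lemma has_derivative_within_atMost_if_eq_near:
  assumes "(f has_real_derivative D) (at x)" "d > 0" "\<And>t. x - d < t \<Longrightarrow> t \<le> x \<Longrightarrow> g t = f t"
  shows "(g has_real_derivative D) (at x within {..x})"
  using assms(2,3)
  by (intro has_field_derivative_transform_within[OF has_field_derivative_at_within[OF assms(1)] assms(2)])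
     (auto simp: dist_real_def)

lemma tame_at_glue:
  assumes "(fl has_real_derivative L) (at x)" "(fr has_real_derivative R) (at x)" "L > 0" "R > 0"
    and "d > 0" "g x = fl x" "g x = fr x"
    and "\<And>t. x - d < t \<Longrightarrow> t < x \<Longrightarrow> g t = fl t" "\<And>t. x < t \<Longrightarrow> t < x + d \<Longrightarrow> g t = fr t"
    and "x \<notin> F \<Longrightarrow> L = R"
  shows "tame_at F g x"
proof -
  have "(g has_real_derivative L) (at x within {..x})"
    by (rule has_derivative_within_atMost_if_eq_near[OF assms(1,5)])
       (use assms(6,8) in \<open>auto simp: order_le_less\<close>)
  moreover have "(g has_real_derivative R) (at x within {x..})"
    by (rule has_derivative_within_atLeast_if_eq_near[OF assms(2,5)])
       (use assms(7,9) in \<open>auto simp: order_le_less\<close>)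
  ultimately show ?thesis
    unfolding tame_at_def using assms(3,4,10) by blast
qed

lemma tame_at_smooth:
  assumes "(f has_real_derivative D) (at x)" "D > 0" "d > 0" "\<And>t. x - d < t \<Longrightarrow> t < x + d \<Longrightarrow> g t = f t"
  shows "tame_at F g x"
  by (rule tame_at_glue[OF assms(1,1,2,2,3)]) (use assms(3,4) in simp_all)

lemma tame_at_moebius:
  assumes "r * x + s \<noteq> 0" "p * s - q * r > 0" "d > 0"
    "\<And>t. x - d < t \<Longrightarrow> t < x + d \<Longrightarrow> g t = moebius p q r s t"
  shows "tame_at F g x"
  using assms by (intro tame_at_smooth[OF moebius_has_real_derivative]) auto

lemma tame_at_translation: "tame_at {} (translation n) x"
  by (rule tame_at_moebius[where p = 1 and q = "of_int n" and r = 0 and s = 1 and d = 1])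
     (simp_all add: moebius_def translation_def)

lemma tame_translation: "tame (translation n)"
  by (rule tameI[OF bij_translation _ _ tame_at_translation, where M = 0 and m = n and M' = 0 and m' = n])
     (auto intro: monoI simp: translation_def)

lemma total_jump_translation: "total_jump (translation n) = 0"
  using total_jump_eq_sum[of "{}"] breakpoints_subset[OF tame_at_translation] by simp

lemma tame_at_moebius_glue:
  assumes "rl * x + sl \<noteq> 0" "rr * x + sr \<noteq> 0" "pl * sl - ql * rl > 0" "pr * sr - qr * rr > 0"
    and "d > 0" "g x = moebius pl ql rl sl x" "g x = moebius pr qr rr sr x"
    and "\<And>t. x - d < t \<Longrightarrow> t < x \<Longrightarrow> g t = moebius pl ql rl sl t"
      "\<And>t. x < t \<Longrightarrow> t < x + d \<Longrightarrow> g t = moebius pr qr rr sr t"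
    and "x \<notin> F \<Longrightarrow> (pl * sl - ql * rl) / (rl * x + sl)\<^sup>2 = (pr * sr - qr * rr) / (rr * x + sr)\<^sup>2"
  shows "tame_at F g x"
  by (rule tame_at_glue[OF moebius_has_real_derivative[OF assms(1)] moebius_has_real_derivative[OF assms(2)]
        _ _ assms(5-10)])
     (use assms(1-4) in simp_all)

lemma tame_at_gen_b: "tame_at {} gen_b x"
proof -
  consider "x < 0" | "x = 0" | "0 < x" "x < 1/2" | "x = 1/2" | "1/2 < x" "x < 1" | "x = 1" | "1 < x"
    by linarith
  then show ?thesis
  proof cases
    case 1 show ?thesis
      by (rule tame_at_moebius[where p = 1 and q = 0 and r = 0 and s = 1 and d = "- x"])
         (use 1 in \<open>auto simp: gen_b_def moebius_def\<close>)
  next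
    case 2 show ?thesis unfolding 2
      by (rule tame_at_moebius_glue[where pl = 1 and ql = 0 and rl = 0 and sl = 1
            and pr = 1 and qr = 0 and rr = "-1" and sr = 1 and d = "1/2"])
         (use 2 in \<open>auto simp: gen_b_def moebius_def\<close>)
  next
    case 3 show ?thesis
      by (rule tame_at_moebius[where p = 1 and q = 0 and r = "-1" and s = 1 and d = "min x (1/2 - x)"])
         (use 3 in \<open>auto simp: gen_b_def moebius_def\<close>)
  next
    case 4 show ?thesis unfolding 4
      by (rule tame_at_moebius_glue[where pl = 1 and ql = 0 and rl = "-1" and sl = 1
            and pr = 3 and qr = "-1" and rr = 1 and sr = 0 and d = "1/2"])
         (use 4 in \<open>auto simp: gen_b_def moebius_def power2_eq_square\<close>)
  next
    case 5 show ?thesis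
      by (rule tame_at_moebius[where p = 3 and q = "-1" and r = 1 and s = 0 and d = "min (x - 1/2) (1 - x)"])
         (use 5 in \<open>auto simp: gen_b_def moebius_def\<close>)
  next
    case 6 show ?thesis unfolding 6
      by (rule tame_at_moebius_glue[where pl = 3 and ql = "-1" and rl = 1 and sl = 0
            and pr = 1 and qr = 1 and rr = 0 and sr = 1 and d = "1/2"])
         (use 6 in \<open>auto simp: gen_b_def moebius_def field_simps\<close>)
  next
    case 7 show ?thesis
      by (rule tame_at_moebius[where p = 1 and q = 1 and r = 0 and s = 1 and d = "x - 1"])
         (use 7 in \<open>auto simp: gen_b_def moebius_def\<close>)
  qed
qed

lemma tame_at_gen_b_inv: "tame_at {} gen_b_inv x"
proof -
  consider "x < 0" | "x = 0" | "0 < x" "x < 1" | "x = 1" | "1 < x" "x < 2" | "x = 2" | "2 < x"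
    by linarith
  then show ?thesis
  proof cases
    case 1 show ?thesis
      by (rule tame_at_moebius[where p = 1 and q = 0 and r = 0 and s = 1 and d = "- x"])
         (use 1 in \<open>auto simp: gen_b_inv_def moebius_def\<close>)
  next
    case 2 show ?thesis unfolding 2
      by (rule tame_at_moebius_glue[where pl = 1 and ql = 0 and rl = 0 and sl = 1
            and pr = 1 and qr = 0 and rr = 1 and sr = 1 and d = 1])
         (auto simp: gen_b_inv_def moebius_def)
  next
    case 3 show ?thesis
      by (rule tame_at_moebius[where p = 1 and q = 0 and r = 1 and s = 1 and d = "min x (1 - x)"])
         (use 3 in \<open>auto simp: gen_b_inv_def moebius_def\<close>)
  next
    case 4 show ?thesis unfolding 4
      by (rule tame_at_moebius_glue[where pl = 1 and ql = 0 and rl = 1 and sl = 1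
            and pr = 0 and qr = 1 and rr = "-1" and sr = 3 and d = "1/2"])
         (auto simp: gen_b_inv_def moebius_def)
  next
    case 5 show ?thesis
      by (rule tame_at_moebius[where p = 0 and q = 1 and r = "-1" and s = 3 and d = "min (x - 1) (2 - x)"])
         (use 5 in \<open>auto simp: gen_b_inv_def moebius_def\<close>)
  next
    case 6 show ?thesis unfolding 6
      by (rule tame_at_moebius_glue[where pl = 0 and ql = 1 and rl = "-1" and sl = 3
            and pr = 1 and qr = "-1" and rr = 0 and sr = 1 and d = "1/2"])
         (auto simp: gen_b_inv_def moebius_def)
  next
    case 7 show ?thesis
      by (rule tame_at_moebius[where p = 1 and q = "-1" and r = 0 and s = 1 and d = "x - 2"])
         (use 7 in \<open>auto simp: gen_b_inv_def moebius_def\<close>)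
  qed
qed

lemma gen_c_derivs:
  "(gen_c has_real_derivative 1) (at 0 within {..0})" "(gen_c has_real_derivative 2) (at 0 within {0..})"
  "(gen_c has_real_derivative 1/2) (at 1 within {..1})" "(gen_c has_real_derivative 1) (at 1 within {1..})"
  using has_derivative_within_atMost_if_eq_near[OF moebius_has_real_derivative[of 0 0 1 1 0], where d = 1]
    has_derivative_within_atLeast_if_eq_near[OF moebius_has_real_derivative[of 1 0 1 2 0], where d = 1]
    has_derivative_within_atMost_if_eq_near[OF moebius_has_real_derivative[of 1 1 1 2 0], where d = 1]
    has_derivative_within_atLeast_if_eq_near[OF moebius_has_real_derivative[of 0 1 1 1 0], where d = 1]
  by (auto simp: gen_c_def moebius_def power2_eq_square)

lemma tame_at_gen_c: "tame_at {0, 1} gen_c x"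
proof -
  consider "x < 0" | "x = 0" | "0 < x" "x < 1" | "x = 1" | "1 < x" by linarith
  then show ?thesis
  proof cases
    case 1 show ?thesis
      by (rule tame_at_moebius[where p = 1 and q = 0 and r = 0 and s = 1 and d = "- x"])
         (use 1 in \<open>auto simp: gen_c_def moebius_def\<close>)
  next
    case 2 show ?thesis unfolding 2
      by (rule tame_at_moebius_glue[where pl = 1 and ql = 0 and rl = 0 and sl = 1
            and pr = 2 and qr = 0 and rr = 1 and sr = 1 and d = 1])
         (auto simp: gen_c_def moebius_def)
  next
    case 3 show ?thesis
      by (rule tame_at_moebius[where p = 2 and q = 0 and r = 1 and s = 1 and d = "min x (1 - x)"])
         (use 3 in \<open>auto simp: gen_c_def moebius_def\<close>)
  next
    case 4 show ?thesis unfolding 4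
      by (rule tame_at_moebius_glue[where pl = 2 and ql = 0 and rl = 1 and sl = 1
            and pr = 1 and qr = 0 and rr = 0 and sr = 1 and d = 1])
         (auto simp: gen_c_def moebius_def)
  next
    case 5 show ?thesis
      by (rule tame_at_moebius[where p = 1 and q = 0 and r = 0 and s = 1 and d = "x - 1"])
         (use 5 in \<open>auto simp: gen_c_def moebius_def\<close>)
  qed
qed

lemma tame_at_gen_c_inv: "tame_at {0, 1} gen_c_inv x"
proof -
  consider "x < 0" | "x = 0" | "0 < x" "x < 1" | "x = 1" | "1 < x" by linarith
  then show ?thesis
  proof cases
    case 1 show ?thesis
      by (rule tame_at_moebius[where p = 1 and q = 0 and r = 0 and s = 1 and d = "- x"])
         (use 1 in \<open>auto simp: gen_c_inv_def moebius_def\<close>)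
  next
    case 2 show ?thesis unfolding 2
      by (rule tame_at_moebius_glue[where pl = 1 and ql = 0 and rl = 0 and sl = 1
            and pr = 1 and qr = 0 and rr = "-1" and sr = 2 and d = 1])
         (auto simp: gen_c_inv_def moebius_def)
  next
    case 3 show ?thesis
      by (rule tame_at_moebius[where p = 1 and q = 0 and r = "-1" and s = 2 and d = "min x (1 - x)"])
         (use 3 in \<open>auto simp: gen_c_inv_def moebius_def\<close>)
  next
    case 4 show ?thesis unfolding 4
      by (rule tame_at_moebius_glue[where pl = 1 and ql = 0 and rl = "-1" and sl = 2
            and pr = 1 and qr = 0 and rr = 0 and sr = 1 and d = 1])
         (auto simp: gen_c_inv_def moebius_def)
  next
    case 5 show ?thesis
      by (rule tame_at_moebius[where p = 1 and q = 0 and r = 0 and s = 1 and d = "x - 1"])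
         (use 5 in \<open>auto simp: gen_c_inv_def moebius_def\<close>)
  qed
qed

lemma mono_gen_b: "mono gen_b"
proof (rule monoI)
  fix t s :: real assume ts: "t \<le> s"
  have across: "gen_b t \<le> gen_b s"
    if "t \<le> p" "p < s" "\<And>u. u \<le> p \<Longrightarrow> gen_b u \<le> v" "\<And>u. p < u \<Longrightarrow> v \<le> gen_b u" for p v
    using that by (meson order_trans)
  consider "s \<le> 0" | "t \<le> 0" "0 < s" | "0 < t" "s \<le> 1/2" | "t \<le> 1/2" "1/2 < s"
    | "1/2 < t" "s \<le> 1" | "t \<le> 1" "1 < s" | "1 < t" using ts by linarith
  then show "gen_b t \<le> gen_b s"
  proof cases
    case 1 then show ?thesis using ts by (simp add: gen_b_def)
  next
    case 2 then show ?thesis by (rule across[where v = 0]) (auto simp: gen_b_def)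
  next
    case 3
    have "t / (1 - t) \<le> s / (1 - s)"
      using 3 ts by (simp add: frac_le divide_simps) (simp add: algebra_simps)
    then show ?thesis using 3 ts by (simp add: gen_b_def)
  next
    case 4 then show ?thesis by (rule across[where v = 1]) (auto simp: gen_b_def field_simps)
  next
    case 5
    have "(3*t - 1) / t \<le> (3*s - 1) / s"
      using 5 ts by (simp add: divide_simps) (simp add: algebra_simps)
    then show ?thesis using 5 ts by (simp add: gen_b_def)
  next
    case 6 then show ?thesis by (rule across[where v = 2]) (auto simp: gen_b_def field_simps)
  next
    case 7 then show ?thesis using ts by (simp add: gen_b_def)
  qed
qed

lemma mono_gen_c: "mono gen_c"
proof (rule monoI)
  fix t s :: real assume ts: "t \<le> s"
  have across: "gen_c t \<le> gen_c s"
    if "t \<le> p" "p < s" "\<And>u. u \<le> p \<Longrightarrow> gen_c u \<le> v" "\<And>u. p < u \<Longrightarrow> v \<le> gen_c u" for p v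
    using that by (meson order_trans)
  consider "s \<le> 0" | "t \<le> 0" "0 < s" | "0 < t" "s \<le> 1" | "t \<le> 1" "1 < s" | "1 < t"
    using ts by linarith
  then show "gen_c t \<le> gen_c s"
  proof cases
    case 1 then show ?thesis using ts by (cases "t = 0") (auto simp: gen_c_def)
  next
    case 2 then show ?thesis by (rule across[where v = 0]) (auto simp: gen_c_def)
  next
    case 3
    have "2*t / (t + 1) \<le> 2*s / (s + 1)"
      using 3 ts by (simp add: divide_simps) (simp add: algebra_simps)
    then show ?thesis using 3 ts by (simp add: gen_c_def)
  next
    case 4 then show ?thesis by (rule across[where v = 1]) (auto simp: gen_c_def field_simps)
  next
    case 5 then show ?thesis using ts by (simp add: gen_c_def)
  qed
qed

lemma tame_gen_b: "tame gen_b"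
  by (rule tameI[OF bij_gen_b mono_gen_b _ tame_at_gen_b, where M = 0 and m = 0 and M' = 1 and m' = 1])
     (auto simp: gen_b_def)

lemma tame_gen_b_inv: "tame gen_b_inv"
  by (rule tameI[OF _ _ _ tame_at_gen_b_inv, where M = 0 and m = 0 and M' = 2 and m' = "-1"])
     (use bij_gen_b_inv mono_inv[OF mono_gen_b bij_gen_b] inv_gen_b in \<open>auto simp: gen_b_inv_def\<close>)

lemma tame_gen_c: "tame gen_c"
  by (rule tameI[OF bij_gen_c mono_gen_c _ tame_at_gen_c, where M = 0 and m = 0 and M' = 1 and m' = 0])
     (auto simp: gen_c_def)

lemma tame_gen_c_inv: "tame gen_c_inv"
  by (rule tameI[OF _ _ _ tame_at_gen_c_inv, where M = 0 and m = 0 and M' = 1 and m' = 0])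
     (use bij_gen_c_inv mono_inv[OF mono_gen_c bij_gen_c] inv_gen_c in \<open>auto simp: gen_c_inv_def\<close>)

lemma total_jump_gen_b: "total_jump gen_b = 0"
  using total_jump_eq_sum[of "{}"] breakpoints_subset[OF tame_at_gen_b] by simp

lemma total_jump_gen_b_inv: "total_jump gen_b_inv = 0"
  using total_jump_eq_sum[of "{}"] breakpoints_subset[OF tame_at_gen_b_inv] by simp

text \<open>The jumps of \<open>c\<close> at 0 and at 1 are both by the factor 2, whence the base 4 in
  \<open>log_jump\<close>.\<close>

lemma total_jump_gen_c: "total_jump gen_c = 1"
proof -
  have ln4: "ln (4::real) = 2 * ln 2"
    using ln_realpow[of 2 2] by simp
  have "log_jump gen_c 0 = (ln 2 - ln 1) / ln 4" "log_jump gen_c 1 = (ln 1 - ln (1/2)) / ln 4"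
    unfolding log_jump_def using gen_c_derivs by (simp_all only: right_deriv_eq left_deriv_eq)
  then have "log_jump gen_c 0 = 1/2" "log_jump gen_c 1 = 1/2"
    by (simp_all add: ln4 ln_div)
  then show ?thesis
    using total_jump_eq_sum[of "{0, 1}" gen_c] breakpoints_subset[OF tame_at_gen_c] by simp
qed

lemma total_jump_gen_c_inv: "total_jump gen_c_inv = -1"
proof -
  have "gen_c \<circ> gen_c_inv = translation 0"
    by (auto simp: translation_def gen_c_gen_c_inv)
  then show ?thesis
    using total_jump_comp[OF tame_gen_c tame_gen_c_inv] total_jump_translation total_jump_gen_c by simp
qed

lemma tame_G0: "g \<in> carrier G0 \<Longrightarrow> tame g \<and> total_jump g \<in> \<int>"
proof -
  assume "g \<in> carrier G0"
  then have "g \<in> generate G0 {gen_a, gen_b, gen_c}" by (simp add: generate_G0)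
  then show ?thesis
  proof (induction g rule: generate.induct)
    case one
    have "\<one>\<^bsub>G0\<^esub> = translation 0" by (auto simp: G0_one translation_def)
    then show ?case using tame_translation total_jump_translation by simp
  next
    case (incl h)
    then show ?case
      using tame_translation total_jump_translation tame_gen_b total_jump_gen_b tame_gen_c total_jump_gen_c
      by (auto simp: gen_a_eq_translation)
  next
    case (inv h)
    then have "inv\<^bsub>G0\<^esub> h \<in> {translation (-1), gen_b_inv, gen_c_inv}"
      using generators_in_G0 by (auto simp: G0_inv gen_a_eq_translation inv_translation inv_gen_b inv_gen_c)
    then show ?case
      using tame_translation total_jump_translation tame_gen_b_inv total_jump_gen_b_inv
        tame_gen_c_inv total_jump_gen_c_inv by auto
  next
    case (eng h1 h2)
    then have "h1 \<otimes>\<^bsub>G0\<^esub> h2 = h1 \<circ> h2"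
      using generate_G0 by (simp add: G0_mult)
    then show ?case using eng.IH tame_comp total_jump_comp by (simp del: comp_apply)
  qed
qed


section \<open>The abelianization\<close>

lemma Z3_simps [simp]:
  "carrier Z3 = UNIV" "\<one>\<^bsub>Z3\<^esub> = (0, 0, 0)"
  "(i, j, k) \<otimes>\<^bsub>Z3\<^esub> (i', j', k') = (i + i', j + j', k + k')"
  by (simp_all add: Z3_def)

lemma comm_group_Z3: "comm_group Z3"
proof (rule comm_groupI)
  show "\<exists>y\<in>carrier Z3. y \<otimes>\<^bsub>Z3\<^esub> x = \<one>\<^bsub>Z3\<^esub>" for x
    by (cases x) (auto intro: add.left_inverse)
qed (auto simp: Z3_def)

interpretation Z3: comm_group Z3
  by (rule comm_group_Z3)

lemma inv_Z3: "inv\<^bsub>Z3\<^esub> (i, j, k) = (- i, - j, - k)"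
  by (rule Z3.inv_equality) simp_all

lemma int_pow_Z3: "(i, j, k) [^]\<^bsub>Z3\<^esub> (n::int) = (n * i, n * j, n * k)"
proof -
  have nat_pow: "(i, j, k) [^]\<^bsub>Z3\<^esub> (m::nat) = (int m * i, int m * j, int m * k)" for m
    by (induction m) (simp_all add: algebra_simps)
  show ?thesis
    by (cases "n < 0") (simp_all add: int_pow_def2 nat_pow inv_Z3)
qed

definition abelianization :: "(real \<Rightarrow> real) \<Rightarrow> int \<times> int \<times> int" where
  "abelianization g = (bot_shift g, top_shift g - bot_shift g, \<lfloor>total_jump g\<rfloor>)"

lemma abelianization_comp:
  assumes "g \<in> carrier G0" "h \<in> carrier G0"
  shows "abelianization (g \<circ> h) = abelianization g \<otimes>\<^bsub>Z3\<^esub> abelianization h"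
proof -
  obtain i j where "total_jump g = of_int i" "total_jump h = of_int j" "tame g" "tame h"
    using tame_G0[OF assms(1)] tame_G0[OF assms(2)] by (auto elim!: Ints_cases)
  then show ?thesis
    by (simp add: abelianization_def bot_shift_comp top_shift_comp total_jump_comp)
qed

lemma abelianization_hom: "abelianization \<in> hom G0 Z3"
  by (rule homI) (simp_all add: G0_mult abelianization_comp)

interpretation abelianization: group_hom G0 Z3 abelianization
  by (rule group_hom.intro[OF group_G0 Z3.is_group]) (simp add: group_hom_axioms_def abelianization_hom)

lemma abelianization_generators:
  "abelianization gen_a = (1, 0, 0)" "abelianization gen_b = (0, 1, 0)" "abelianization gen_c = (0, 0, 1)"
proof -
  have "bot_shift gen_b = 0" "bot_shift gen_c = 0"
    by (rule bot_shift_eq[where M = 0]; simp add: gen_b_def gen_c_def)+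
  moreover have "top_shift gen_b = 1" "top_shift gen_c = 0"
    by (rule top_shift_eq[where M = 1]; simp add: gen_b_def gen_c_def)+
  moreover have "bot_shift (translation n) = n" "top_shift (translation n) = n" for n
    by (rule bot_shift_eq[where M = 0] top_shift_eq[where M = 0]; simp add: translation_def)+
  ultimately show "abelianization gen_a = (1, 0, 0)" "abelianization gen_b = (0, 1, 0)"
    "abelianization gen_c = (0, 0, 1)"
    by (simp_all add: abelianization_def gen_a_eq_translation total_jump_translation
        total_jump_gen_b total_jump_gen_c)
qed

lemma abelianization_surj: "abelianization ` carrier G0 = carrier Z3"
proof -
  have "(i, j, k) \<in> abelianization ` carrier G0" for i j k
  proof
    let ?g = "gen_a [^]\<^bsub>G0\<^esub> i \<otimes>\<^bsub>G0\<^esub> gen_b [^]\<^bsub>G0\<^esub> j \<otimes>\<^bsub>G0\<^esub> gen_c [^]\<^bsub>G0\<^esub> k"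
    show "?g \<in> carrier G0" using generators_in_G0 by simp
    show "(i, j, k) = abelianization ?g"
      using generators_in_G0 by (simp add: abelianization.hom_int_pow abelianization_generators int_pow_Z3)
  qed
  then show ?thesis by auto
qed

text \<open>The projection onto \<open>G0/G0'\<close> equals \<open>F \<circ> abelianization\<close>: both are homomorphisms on
  \<open>G0\<close> that agree on the generators.\<close>

lemma kernel_abelianization: "kernel G0 Z3 abelianization \<subseteq> derived G0 (carrier G0)"
proof
  fix g assume g: "g \<in> kernel G0 Z3 abelianization"
  define D where "D = derived G0 (carrier G0)"
  interpret D: normal D G0 unfolding D_def by (rule G0.derived_self_is_normal)
  define Q where "Q = G0 Mod D"
  interpret Q: comm_group Q unfolding Q_def D_def by (rule G0.derived_quot_is_comm_group)
  define proj where "proj x = D #>\<^bsub>G0\<^esub> x" for x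
  have proj: "proj \<in> hom G0 Q" unfolding proj_def Q_def by (rule D.r_coset_hom_Mod)
  have proj_gens: "proj gen_a \<in> carrier Q" "proj gen_b \<in> carrier Q" "proj gen_c \<in> carrier Q"
    using proj generators_in_G0 by (auto simp: hom_def)
  define F where "F v = proj gen_a [^]\<^bsub>Q\<^esub> fst v \<otimes>\<^bsub>Q\<^esub> proj gen_b [^]\<^bsub>Q\<^esub> fst (snd v)
    \<otimes>\<^bsub>Q\<^esub> proj gen_c [^]\<^bsub>Q\<^esub> snd (snd v)" for v :: "int \<times> int \<times> int"
  have F: "F \<in> hom Z3 Q"
  proof (rule homI)
    show "F v \<in> carrier Q" for v using proj_gens by (simp add: F_def)
    show "F (u \<otimes>\<^bsub>Z3\<^esub> v) = F u \<otimes>\<^bsub>Q\<^esub> F v" for u v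
      using proj_gens by (cases u, cases v) (simp add: F_def Q.int_pow_mult Q.m_ac)
  qed
  have "proj x = (F \<circ> abelianization) x" if "x \<in> generate G0 {gen_a, gen_b, gen_c}" for x
  proof (rule G0.hom_eq_on_generate[OF Q.is_group proj hom_compose[OF abelianization_hom F] _ _ that])
    show "{gen_a, gen_b, gen_c} \<subseteq> carrier G0" using generators_in_G0 by simp
    show "proj s = (F \<circ> abelianization) s" if "s \<in> {gen_a, gen_b, gen_c}" for s
      using that proj_gens by (auto simp: F_def abelianization_generators)
  qed
  then have "proj g = F (0, 0, 0)"
    using g generate_G0 by (simp add: kernel_def)
  also have "\<dots> = \<one>\<^bsub>Q\<^esub>" using proj_gens by (simp add: F_def)
  also have "\<dots> = D" by (simp add: Q_def FactGroup_def)
  finally show "g \<in> D"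
    using g G0.rcos_self[OF _ D.subgroup_axioms] by (auto simp: kernel_def proj_def)
qed

theorem mainTheorem6:
  shows "(\<exists>ab. ab \<in> hom G0 Z3 \<and> ab gen_a = (1, 0, 0) \<and> ab gen_b = (0, 1, 0) \<and> ab gen_c = (0, 0, 1)
            \<and> bij_betw (\<lambda>K. ab ` K) {K. fin_index_subgroup G0 K} {H. fin_index_subgroup Z3 H})
         \<and> (\<forall>K. fin_index_subgroup G0 K \<longrightarrow>
               K \<lhd> G0 \<and> derived G0 K = derived G0 (carrier G0))"
proof (intro conjI allI impI)
  have "{K. fin_index_subgroup G0 K} = {K. fin_index_subgroup G0 K \<and> kernel G0 Z3 abelianization \<subseteq> K}"
    using kernel_abelianization derived_G0_subset_fin_index_subgroup by blast
  then show "\<exists>ab. ab \<in> hom G0 Z3 \<and> ab gen_a = (1, 0, 0) \<and> ab gen_b = (0, 1, 0) \<and> ab gen_c = (0, 0, 1)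
      \<and> bij_betw (\<lambda>K. ab ` K) {K. fin_index_subgroup G0 K} {H. fin_index_subgroup Z3 H}"
    using abelianization.bij_betw_fin_index_subgroups[OF abelianization_surj]
      abelianization_hom abelianization_generators
    by (intro exI[of _ abelianization]) simp
next
  fix K assume K: "fin_index_subgroup G0 K"
  then have "subgroup K G0" by (simp add: fin_index_subgroup_def)
  then show "K \<lhd> G0" "derived G0 K = derived G0 (carrier G0)"
    using G0.normal_if_derived_subset G0.derived_eq_if_perfect derived_G0_perfect
      derived_G0_subset_fin_index_subgroup[OF K] by blast+
qed

end
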